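(* Let $q>0$ be transcendental, or $q\ge4$. Then for every real number $a$ there is at most one proper path $\mathbf m$ for $q$ with $c(q,\mathbf m)=a$. In particular, the weight $w_q$ is unique.
   Context: Let $q>0$. For an integer $k\ge0$ and $\mathbf m=(m_0,\dots,m_k)\in\mathbb Z^{k+1}$ put $\mathbf m_j=(m_0,\dots,m_j)$, $0\le j\le k$. Define $c(q,\mathbf m_0)=m_0$ and recursively $c(q,\mathbf m_j)=m_j+\frac{1}{q\,c(q,\mathbf m_{j-1})}$ for $1\le j\le k$, so that $c(q,\mathbf m)=m_k+\cfrac{1}{qm_{k-1}+\cfrac{q}{\ddots+\cfrac{q}{qm_0}}}$. The vector $\mathbf m$ is a path for $q$ (of length $k$) if $c(q,\mathbf m_j)\ne0$ for $0\le j\le k-1$ (all denominators nonzero). A path is proper if $m_j\ne0$ for all $0\le j\le k-1$. The weight of a path is $w_q(\mathbf m)=q^{k/2}\prod_{j=0}^{k-1}|c(q,\mathbf m_j)|$ (and $w_q(\mathbf m)=1$ if $k=0$). The weight $w_q$ is called unique if $w_q(\mathbf m)=w_q(\mathbf n)$ for all paths $\mathbf m,\mathbf n$ for $q$ with $c(q,\mathbf m)=c(q,\mathbf n)$. *)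

theory Defs
  imports Complex_Main "HOL-Computational_Algebra.Polynomial"
begin

text \<open>A vector m = (m_0,...,m_k) in Z^(k+1) is represented as an int list of length k+1.
  cval q m j is c(q, m_j), where m is accessed through its index function.\<close>

fun cval :: "real \<Rightarrow> (nat \<Rightarrow> int) \<Rightarrow> nat \<Rightarrow> real" where
  "cval q m 0 = of_int (m 0)"
| "cval q m (Suc j) = of_int (m (Suc j)) + 1 / (q * cval q m j)"

definition cfrac :: "real \<Rightarrow> int list \<Rightarrow> real" where
  "cfrac q ms = cval q (\<lambda>j. ms ! j) (length ms - 1)"

definition is_path :: "real \<Rightarrow> int list \<Rightarrow> bool" where
  "is_path q ms \<longleftrightarrow> ms \<noteq> [] \<and> (\<forall>j < length ms - 1. cval q (\<lambda>i. ms ! i) j \<noteq> 0)"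

definition proper_path :: "real \<Rightarrow> int list \<Rightarrow> bool" where
  "proper_path q ms \<longleftrightarrow> is_path q ms \<and> (\<forall>j < length ms - 1. ms ! j \<noteq> 0)"

definition weight :: "real \<Rightarrow> int list \<Rightarrow> real" where
  "weight q ms = q powr (real (length ms - 1) / 2) *
     (\<Prod>j < length ms - 1. \<bar>cval q (\<lambda>i. ms ! i) j\<bar>)"

definition weight_unique :: "real \<Rightarrow> bool" where
  "weight_unique q \<longleftrightarrow> (\<forall>ms ns. is_path q ms \<and> is_path q ns \<and> cfrac q ms = cfrac q ns
       \<longrightarrow> weight q ms = weight q ns)"

end

theory Submission
  imports Defs
begin

(* For q >= 4 the partial values of a proper path satisfy |c(q, m_j)| > 1/2, so the tail
   1/(q c(q, m_(k-1))) lies in (-1/2, 1/2) and vanishes only for k = 0: the last entry m_k is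
   the integer nearest to c(q, m), and the rest of the path is recovered inductively from
   c(q, m_(k-1)). For transcendental q, c(q, m) = P(q)/Q(q) with integer polynomials P, Q that
   depend only on m, so c(q, m) = c(q, n) is a polynomial identity and persists at q = 4.
   The weight is unique because an interior zero can be removed, replacing
   (m_(j-1), 0, m_(j+1)) by m_(j-1) + m_(j+1), without changing c or w_q. *)

lemma cval_append: "j < length xs \<Longrightarrow> cval q (\<lambda>i. (xs @ ys) ! i) j = cval q (\<lambda>i. xs ! i) j"
  by (induction j) (simp_all add: nth_append)

lemma cfrac_singleton [simp]: "cfrac q [x] = of_int x"
  by (simp add: cfrac_def)

lemma cfrac_snoc:
  assumes "xs \<noteq> []"
  shows "cfrac q (xs @ [x]) = of_int x + 1 / (q * cfrac q xs)"
proof -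
  obtain n where n: "length xs = Suc n"
    using assms by (cases xs) auto
  have "cval q (\<lambda>i. (xs @ [x]) ! i) n = cval q (\<lambda>i. xs ! i) n"
    by (rule cval_append) (simp add: n)
  then show ?thesis
    by (simp add: cfrac_def n nth_append)
qed

lemma is_path_Nil [simp]: "\<not> is_path q []"
  and is_path_singleton [simp]: "is_path q [x]"
  by (simp_all add: is_path_def)

lemma is_path_snoc:
  assumes "xs \<noteq> []"
  shows "is_path q (xs @ [x]) \<longleftrightarrow> is_path q xs \<and> cfrac q xs \<noteq> 0"
proof -
  obtain n where n: "length xs = Suc n"
    using assms by (cases xs) auto
  have "is_path q (xs @ [x]) \<longleftrightarrow> (\<forall>j<Suc n. cval q (\<lambda>i. xs ! i) j \<noteq> 0)"
    by (simp add: is_path_def n cval_append)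
  also have "\<dots> \<longleftrightarrow> is_path q xs \<and> cfrac q xs \<noteq> 0"
    using assms by (auto simp: is_path_def cfrac_def n less_Suc_eq)
  finally show ?thesis .
qed

lemma is_path_appendD: "is_path q (xs @ ys) \<Longrightarrow> xs \<noteq> [] \<Longrightarrow> is_path q xs"
proof (induction ys rule: rev_induct)
  case (snoc y ys)
  then show ?case
    using is_path_snoc[of "xs @ ys" q y] by simp
qed simp

lemma weight_singleton [simp]: "q \<noteq> 0 \<Longrightarrow> weight q [x] = 1"
  by (simp add: weight_def)

lemma weight_snoc:
  assumes "xs \<noteq> []" "q > 0"
  shows "weight q (xs @ [x]) = weight q xs * sqrt q * \<bar>cfrac q xs\<bar>"
proof -
  obtain n where n: "length xs = Suc n"
    using assms by (cases xs) auto
  have "q powr (real (Suc n) / 2) = q powr (real n / 2) * sqrt q"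
    using assms by (simp add: add_divide_distrib powr_add powr_half_sqrt)
  then show ?thesis
    by (simp add: weight_def cfrac_def n cval_append)
qed

lemma is_path_snoc_indep: "is_path q (xs @ [x]) \<longleftrightarrow> is_path q (xs @ [y])"
  by (cases "xs = []") (simp_all add: is_path_snoc)

lemma weight_snoc_indep: "q > 0 \<Longrightarrow> weight q (xs @ [x]) = weight q (xs @ [y])"
  by (cases "xs = []") (simp_all add: weight_snoc)

lemma not_is_path_Cons_zero: "\<not> is_path q (0 # x # xs)"
  by (auto simp: is_path_def)

lemma proper_path_iff: "proper_path q ms \<longleftrightarrow> is_path q ms \<and> 0 \<notin> set (butlast ms)"
  by (auto simp: proper_path_def in_set_conv_nth nth_butlast)

lemma cfrac_append_cong:
  assumes "xs \<noteq> []" "ys \<noteq> []" "cfrac q xs = cfrac q ys"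
  shows "cfrac q (xs @ zs) = cfrac q (ys @ zs)"
proof (induction zs rule: rev_induct)
  case (snoc z zs)
  have "cfrac q (xs @ zs @ [z]) = of_int z + 1 / (q * cfrac q (xs @ zs))"
    using cfrac_snoc[of "xs @ zs" q z] assms(1) by simp
  also have "\<dots> = cfrac q (ys @ zs @ [z])"
    using cfrac_snoc[of "ys @ zs" q z] assms(2) snoc by simp
  finally show ?case .
qed (use assms in simp)

lemma is_path_append_cong:
  assumes "xs \<noteq> []" "ys \<noteq> []" "cfrac q xs = cfrac q ys" "is_path q xs \<longleftrightarrow> is_path q ys"
  shows "is_path q (xs @ zs) \<longleftrightarrow> is_path q (ys @ zs)"
proof (induction zs rule: rev_induct)
  case (snoc z zs)
  then show ?case
    using is_path_snoc[of "xs @ zs" q z] is_path_snoc[of "ys @ zs" q z]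
      cfrac_append_cong[OF assms(1-3)] assms(1,2) by simp
qed (use assms in simp)

lemma weight_append_cong:
  assumes "q > 0" "xs \<noteq> []" "ys \<noteq> []" "cfrac q xs = cfrac q ys" "weight q xs = weight q ys"
  shows "weight q (xs @ zs) = weight q (ys @ zs)"
proof (induction zs rule: rev_induct)
  case (snoc z zs)
  then show ?case
    using weight_snoc[of "xs @ zs" q z] weight_snoc[of "ys @ zs" q z]
      cfrac_append_cong[OF assms(2-4)] assms by simp
qed (use assms in simp)

lemma cfrac_contract_zero:
  assumes "q \<noteq> 0"
  shows "cfrac q (as @ [a, 0, b]) = cfrac q (as @ [a + b])"
proof -
  have "cfrac q (as @ [a, 0, b]) = of_int b + 1 / (q * (1 / (q * cfrac q (as @ [a]))))"
    using cfrac_snoc[of "as @ [a, 0]" q b] cfrac_snoc[of "as @ [a]" q 0] by simp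
  also have "\<dots> = of_int b + cfrac q (as @ [a])"
    using assms by simp
  also have "\<dots> = cfrac q (as @ [a + b])"
    by (cases "as = []") (simp_all add: cfrac_snoc)
  finally show ?thesis .
qed

lemma weight_contract_zero:
  assumes "q > 0" "cfrac q (as @ [a]) \<noteq> 0"
  shows "weight q (as @ [a, 0, b]) = weight q (as @ [a + b])"
proof -
  have "weight q (as @ [a, 0, b]) = weight q (as @ [a]) * (sqrt q * sqrt q) *
      (\<bar>cfrac q (as @ [a])\<bar> * \<bar>1 / (q * cfrac q (as @ [a]))\<bar>)"
    using assms(1) weight_snoc[of "as @ [a, 0]" q b] weight_snoc[of "as @ [a]" q 0]
      cfrac_snoc[of "as @ [a]" q 0] by simp
  also have "\<dots> = weight q (as @ [a])"
    using assms by (simp add: abs_mult)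
  finally show ?thesis
    using weight_snoc_indep[OF assms(1)] by metis
qed

lemma improper_pathE:
  assumes "is_path q ms" "\<not> proper_path q ms"
  obtains as a b cs where "ms = (as @ [a, 0, b]) @ cs"
proof -
  obtain xs ys where split: "butlast ms = xs @ 0 # ys"
    using assms by (auto simp: proper_path_iff dest: split_list)
  have ms: "ms = xs @ 0 # ys @ [last ms]"
    using assms(1) split append_butlast_last_id[of ms] by (metis append.assoc append_Cons is_path_Nil)
  have "xs \<noteq> []"
  proof
    assume "xs = []"
    then have "ms = 0 # hd (ys @ [last ms]) # tl (ys @ [last ms])"
      using ms by simp
    then show False
      using assms(1) not_is_path_Cons_zero by metis
  qed
  then obtain as a where "xs = as @ [a]"
    by (cases xs rule: rev_cases) auto
  moreover obtain b cs where "ys @ [last ms] = b # cs"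
    by (cases "ys @ [last ms]") auto
  ultimately show thesis
    using ms that by simp
qed

lemma proper_path_exists:
  assumes "q > 0" "is_path q ms"
  shows "\<exists>ns. proper_path q ns \<and> cfrac q ns = cfrac q ms \<and> weight q ns = weight q ms"
  using assms(2)
proof (induction "length ms" arbitrary: ms rule: less_induct)
  case less
  show ?case
  proof (cases "proper_path q ms")
    case False
    then obtain as a b cs where ms: "ms = (as @ [a, 0, b]) @ cs"
      using less.prems improper_pathE by blast
    define ms' where "ms' = (as @ [a + b]) @ cs"
    have path_a0b: "is_path q ((as @ [a, 0]) @ [b])"
      using less.prems ms is_path_appendD by simp
    then have path_a: "is_path q (as @ [a])" and nonzero_a: "cfrac q (as @ [a]) \<noteq> 0"
      using is_path_snoc[of "as @ [a, 0]" q b] is_path_snoc[of "as @ [a]" q 0] by simp_all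
    have cfrac_eq: "cfrac q (as @ [a, 0, b]) = cfrac q (as @ [a + b])"
      using assms(1) by (simp add: cfrac_contract_zero)
    have "is_path q (as @ [a, 0, b]) \<longleftrightarrow> is_path q (as @ [a + b])"
      using path_a0b path_a is_path_snoc_indep by (metis append.assoc append_Cons append_Nil)
    then have "is_path q ms'"
      using less.prems is_path_append_cong[OF _ _ cfrac_eq] by (simp add: ms ms'_def)
    moreover have "length ms' < length ms"
      by (simp add: ms ms'_def)
    moreover have "cfrac q ms' = cfrac q ms" "weight q ms' = weight q ms"
      using cfrac_append_cong[OF _ _ cfrac_eq] weight_append_cong[OF assms(1) _ _ cfrac_eq]
        weight_contract_zero[OF assms(1) nonzero_a]
      by (simp_all add: ms ms'_def)
    ultimately show ?thesis
      using less.hyps by metis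
  qed blast
qed

lemma weight_uniqueI:
  assumes "q > 0"
    and "\<And>ms ns. proper_path q ms \<Longrightarrow> proper_path q ns \<Longrightarrow> cfrac q ms = cfrac q ns \<Longrightarrow> ms = ns"
  shows "weight_unique q"
  unfolding weight_unique_def
proof (intro allI impI)
  fix ms ns
  assume "is_path q ms \<and> is_path q ns \<and> cfrac q ms = cfrac q ns"
  then show "weight q ms = weight q ns"
    using proper_path_exists[OF assms(1)] assms(2) by metis
qed

lemma cfrac_snoc_eq_iff:
  assumes "q \<noteq> 0" "is_path q (xs @ [x])"
  shows "cfrac q (xs @ [x]) = of_int x \<longleftrightarrow> xs = []"
  using assms by (cases "xs = []") (simp_all add: cfrac_snoc is_path_snoc)

lemma abs_reciprocal_lt_half:
  fixes q c :: real
  assumes "q \<ge> 4" "\<bar>c\<bar> > 1/2"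
  shows "\<bar>1 / (q * c)\<bar> < 1/2"
proof -
  have "2 < 4 * \<bar>c\<bar>"
    using assms(2) by simp
  also have "\<dots> \<le> \<bar>q * c\<bar>"
    using assms by (simp add: abs_mult mult_right_mono)
  finally show ?thesis
    by (simp add: abs_divide divide_simps)
qed

lemma abs_cfrac_gt_half:
  assumes "q \<ge> 4"
  shows "xs \<noteq> [] \<Longrightarrow> 0 \<notin> set xs \<Longrightarrow> \<bar>cfrac q xs\<bar> > 1/2"
proof (induction xs rule: rev_induct)
  case (snoc x xs)
  have "\<bar>x\<bar> \<ge> 1"
    using snoc.prems by auto
  then have "\<bar>real_of_int x\<bar> \<ge> 1"
    by linarith
  show ?case
  proof (cases "xs = []")
    case False
    then have "\<bar>1 / (q * cfrac q xs)\<bar> < 1/2"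
      using snoc abs_reciprocal_lt_half[OF assms] by simp
    with \<open>\<bar>real_of_int x\<bar> \<ge> 1\<close> show ?thesis
      unfolding cfrac_snoc[OF False] by arith
  qed (use \<open>\<bar>real_of_int x\<bar> \<ge> 1\<close> in simp)
qed simp

lemma proper_path_iff_ge_4:
  assumes "q \<ge> 4"
  shows "proper_path q ms \<longleftrightarrow> ms \<noteq> [] \<and> 0 \<notin> set (butlast ms)"
proof (induction ms rule: rev_induct)
  case (snoc x xs)
  then show ?case
    using abs_cfrac_gt_half[OF assms, of xs]
    by (cases "xs = []") (auto simp: proper_path_iff is_path_snoc dest: in_set_butlastD)
qed (simp add: proper_path_iff)

lemma proper_path_ge_4:
  assumes "proper_path q ms" "r \<ge> 4"
  shows "proper_path r ms"
proof -
  have "ms \<noteq> []" "0 \<notin> set (butlast ms)"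
    using assms(1) by (auto simp: proper_path_iff)
  then show ?thesis
    using proper_path_iff_ge_4[OF assms(2)] by simp
qed

lemma round_cfrac_ge_4:
  assumes "q \<ge> 4" "proper_path q (xs @ [x])"
  shows "round (cfrac q (xs @ [x])) = x"
proof (cases "xs = []")
  case False
  then have "\<bar>cfrac q (xs @ [x]) - of_int x\<bar> < 1/2"
    using assms abs_cfrac_gt_half[OF assms(1), of xs] abs_reciprocal_lt_half[OF assms(1)]
    by (simp add: cfrac_snoc proper_path_iff_ge_4)
  then show ?thesis
    by (rule round_unique')
qed simp

lemma proper_path_unique_ge_4:
  assumes "q \<ge> 4"
  shows "proper_path q ms \<Longrightarrow> proper_path q ns \<Longrightarrow> cfrac q ms = cfrac q ns \<Longrightarrow> ms = ns"
proof (induction ms arbitrary: ns rule: rev_induct)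
  case (snoc x xs)
  obtain ys y where ns: "ns = ys @ [y]"
    using snoc.prems(2) by (cases ns rule: rev_cases) (auto simp: proper_path_def)
  have "x = y"
    using round_cfrac_ge_4[OF assms] snoc.prems ns by metis
  have paths: "is_path q (xs @ [x])" "is_path q (ys @ [x])"
    using snoc.prems ns \<open>x = y\<close> by (simp_all add: proper_path_def)
  have "xs = [] \<longleftrightarrow> ys = []"
    using cfrac_snoc_eq_iff[of q, OF _ paths(1)] cfrac_snoc_eq_iff[of q, OF _ paths(2)]
      assms snoc.prems(3) ns \<open>x = y\<close> by simp
  moreover have "xs = ys" if "xs \<noteq> []" "ys \<noteq> []"
  proof (rule snoc.IH)
    show "proper_path q xs" "proper_path q ys"
      using snoc.prems that ns
      by (auto simp: proper_path_iff_ge_4[OF assms] butlast_append dest: in_set_butlastD)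
    show "cfrac q xs = cfrac q ys"
      using snoc.prems(3) that ns \<open>x = y\<close> assms by (simp add: cfrac_snoc)
  qed
  ultimately show ?case
    using ns \<open>x = y\<close> by blast
qed (simp add: proper_path_def)

(* If c(q, m_(j-1)) = P(q)/Q(q), then c(q, m_j) = (m_j q P(q) + Q(q)) / (q P(q)); starting
   from the formal value 1/0 gives P = m_0 X and Q = X for a single entry. *)
definition cfrac_polys :: "int list \<Rightarrow> real poly \<times> real poly" where
  "cfrac_polys ms = fold (\<lambda>m (P, Q). (smult (of_int m) (pCons 0 P) + Q, pCons 0 P)) ms (1, 0)"

lemma cfrac_polys_snoc:
  "cfrac_polys (xs @ [x]) = (case cfrac_polys xs of (P, Q) \<Rightarrow> (smult (of_int x) (pCons 0 P) + Q, pCons 0 P))"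
  by (simp add: cfrac_polys_def)

lemma cfrac_polys_coeff_Ints:
  "(\<forall>i. coeff (fst (cfrac_polys ms)) i \<in> \<int>) \<and> (\<forall>i. coeff (snd (cfrac_polys ms)) i \<in> \<int>)"
proof (induction ms rule: rev_induct)
  case Nil
  then show ?case
    by (simp add: cfrac_polys_def coeff_1)
next
  case (snoc x xs)
  then show ?case
    by (auto simp: cfrac_polys_snoc coeff_pCons split: prod.split nat.split)
qed

lemma cfrac_polys_eval:
  assumes "q \<noteq> 0" "is_path q ms" "cfrac_polys ms = (P, Q)"
  shows "poly Q q \<noteq> 0 \<and> cfrac q ms = poly P q / poly Q q"
  using assms(2,3)
proof (induction ms arbitrary: P Q rule: rev_induct)
  case (snoc x xs)
  obtain P' Q' where PQ': "cfrac_polys xs = (P', Q')"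
    by fastforce
  then have PQ: "P = smult (of_int x) (pCons 0 P') + Q'" "Q = pCons 0 P'"
    using snoc.prems(2) by (auto simp: cfrac_polys_snoc simp del: smult_pCons)
  show ?case
  proof (cases "xs = []")
    case True
    then show ?thesis
      using PQ PQ' assms(1) by (simp add: cfrac_polys_def)
  next
    case False
    then have IH: "poly Q' q \<noteq> 0" "cfrac q xs = poly P' q / poly Q' q" and "cfrac q xs \<noteq> 0"
      using snoc PQ' by (simp_all add: is_path_snoc)
    then have "poly P' q \<noteq> 0"
      by auto
    then have "cfrac q (xs @ [x]) = (of_int x * (q * poly P' q) + poly Q' q) / (q * poly P' q)"
      unfolding cfrac_snoc[OF False] IH(2) using IH(1) assms(1) by (simp add: field_simps)
    then show ?thesis
      using PQ \<open>poly P' q \<noteq> 0\<close> assms(1) by (simp add: algebra_simps)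
  qed
qed simp

lemma cfrac_eq_transfer:
  assumes "\<not> algebraic q" "r \<noteq> 0"
    and "is_path q ms" "is_path q ns" "is_path r ms" "is_path r ns"
    and "cfrac q ms = cfrac q ns"
  shows "cfrac r ms = cfrac r ns"
proof -
  obtain Pm Qm Pn Qn where m: "cfrac_polys ms = (Pm, Qm)" and n: "cfrac_polys ns = (Pn, Qn)"
    by fastforce
  define D where "D = Pm * Qn - Pn * Qm"
  have "q \<noteq> 0"
    using assms(1) by auto
  then have "poly D q = 0"
    using cfrac_polys_eval[OF _ assms(3) m] cfrac_polys_eval[OF _ assms(4) n] assms(7)
    by (simp add: D_def field_simps)
  moreover have "\<forall>i. coeff D i \<in> \<int>"
    using cfrac_polys_coeff_Ints[of ms] cfrac_polys_coeff_Ints[of ns] m n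
    by (auto simp: D_def coeff_mult intro!: Ints_diff Ints_sum Ints_mult)
  ultimately have "D = 0"
    using assms(1) algebraicI by blast
  then have "poly Pm r * poly Qn r = poly Pn r * poly Qm r"
    by (metis D_def eq_iff_diff_eq_0 poly_mult)
  then show ?thesis
    using cfrac_polys_eval[OF assms(2,5) m] cfrac_polys_eval[OF assms(2,6) n]
    by (simp add: frac_eq_eq)
qed

lemma proper_path_unique_transcendental:
  assumes "\<not> algebraic q" "proper_path q ms" "proper_path q ns" "cfrac q ms = cfrac q ns"
  shows "ms = ns"
proof -
  have "proper_path 4 ms" "proper_path 4 ns"
    using assms(2,3) proper_path_ge_4 by simp_all
  moreover from this have "cfrac 4 ms = cfrac 4 ns"
    using cfrac_eq_transfer[OF assms(1), of 4 ms ns] assms(2-4) by (simp add: proper_path_def)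
  ultimately show ?thesis
    using proper_path_unique_ge_4[of 4] by simp
qed

theorem theorem2:
  fixes q :: real
  assumes "q > 0" and "\<not> algebraic q \<or> q \<ge> 4"
  shows "(\<forall>a::real. \<forall>ms ns. proper_path q ms \<and> proper_path q ns \<and> cfrac q ms = a \<and> cfrac q ns = a
            \<longrightarrow> ms = ns) \<and> weight_unique q"
proof -
  have unique: "ms = ns" if "proper_path q ms" "proper_path q ns" "cfrac q ms = cfrac q ns" for ms ns
    using assms(2) proper_path_unique_ge_4 proper_path_unique_transcendental that by blast
  then show ?thesis
    using weight_uniqueI[OF assms(1)] by blast
qed

end
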